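(* Consider the repeated service game described in the context, with $t>0$, $\tau\in(0,t)$, $c>0$, $p>c$, $d\in(0,1)$, $w\in(0,1)$, and a strictly decreasing continuous utility $\Gamma:[0,1]\to(0,\infty)$ with $\Gamma(0)>p$. If the cooperation conditions hold, then $$d\le d_s(w;\tau,p):=1-\frac{c\left(1-(1-w)\frac{\tau}{t}\right)}{wp}\qquad\text{and}\qquad d\le d_c(w;\tau,p):=\Gamma^{-1}\!\left(\frac{p}{1-(1-w)\frac{\tau}{t}}\right).$$
   Context: A service provider (SP) and a client interact in rounds of duration $t>0$. The parameters are: trial time $\tau$, SP cost per unit time $c$, price per unit time $p$, channel outage probability $d$, continuation probability (cooperation willingness) $w$, and a client utility function $\Gamma$. When both players use the cooperative strategy COOP, the long-term payoffs are $$\Pi_s^{\mathrm C}=\frac{(1-d)(p-c)t-dc\tau}{1-(1-d)w},\qquad \Pi_c^{\mathrm C}=\frac{(1-d)(\Gamma(d)-p)t+d\Gamma(d)\tau}{1-(1-d)w}.$$ For an integer $j\ge 2$, the long-term payoff of a player using the defect-and-recover-after-$j$-rounds strategy JDEF$_j$ against COOP is: - for the SP, $$\Pi_s^{(j)}=\frac{(1-d)\big(pt-c\tau-w^{j-1}c(t-\tau)\big)-dc\tau}{1-(1-d)w^{j}};$$ - for the client, $$\Pi_c^{(j)}=\frac{(1-d)\big(\Gamma(d)\tau+w^{j-1}(\Gamma(d)(t-\tau)-pt)\big)+d\Gamma(d)\tau}{1-(1-d)w^{j}}.$$ The cooperation conditions hold when both of the following hold: - $\Pi_s^{\mathrm C}\ge\Pi_s^{(j)}$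 for all integers $j\ge2$; - $\Pi_c^{\mathrm C}\ge \Pi_c^{(j)}$ for all integers $j\ge 2$. For $0<y\le \Gamma(0)$, we write $\Gamma^{-1}(y):=\sup\{x\in[0,1]:\Gamma(x)\ge y\}$. This coincides with the inverse of $\Gamma$ whenever $y$ is in the range of $\Gamma$. *)

theory Defs
  imports Complex_Main
begin

text \<open>Long-term payoffs. Parameters: t (round duration), tau (trial time), c (SP cost),
  p (price), d (outage probability), w (continuation probability), G = Gamma(d).\<close>

definition PiS_coop :: "real \<Rightarrow> real \<Rightarrow> real \<Rightarrow> real \<Rightarrow> real \<Rightarrow> real \<Rightarrow> real" where
  "PiS_coop t tau c p d w = ((1 - d) * (p - c) * t - d * c * tau) / (1 - (1 - d) * w)"

definition PiC_coop :: "real \<Rightarrow> real \<Rightarrow> real \<Rightarrow> real \<Rightarrow> real \<Rightarrow> real \<Rightarrow> real" where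
  "PiC_coop t tau G p d w = ((1 - d) * (G - p) * t + d * G * tau) / (1 - (1 - d) * w)"

definition PiS_jdef :: "nat \<Rightarrow> real \<Rightarrow> real \<Rightarrow> real \<Rightarrow> real \<Rightarrow> real \<Rightarrow> real \<Rightarrow> real" where
  "PiS_jdef j t tau c p d w =
     ((1 - d) * (p * t - c * tau - w ^ (j - 1) * c * (t - tau)) - d * c * tau) / (1 - (1 - d) * w ^ j)"

definition PiC_jdef :: "nat \<Rightarrow> real \<Rightarrow> real \<Rightarrow> real \<Rightarrow> real \<Rightarrow> real \<Rightarrow> real \<Rightarrow> real" where
  "PiC_jdef j t tau G p d w =
     ((1 - d) * (G * tau + w ^ (j - 1) * (G * (t - tau) - p * t)) + d * G * tau) / (1 - (1 - d) * w ^ j)"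

definition cooperation_conditions ::
  "real \<Rightarrow> real \<Rightarrow> real \<Rightarrow> real \<Rightarrow> real \<Rightarrow> real \<Rightarrow> (real \<Rightarrow> real) \<Rightarrow> bool" where
  "cooperation_conditions t tau c p d w Gamma \<longleftrightarrow>
     (\<forall>j::nat. j \<ge> 2 \<longrightarrow> PiS_coop t tau c p d w \<ge> PiS_jdef j t tau c p d w) \<and>
     (\<forall>j::nat. j \<ge> 2 \<longrightarrow> PiC_coop t tau (Gamma d) p d w \<ge> PiC_jdef j t tau (Gamma d) p d w)"

text \<open>Generalised inverse: Gamma^{-1}(y) = sup {x in [0,1]. Gamma x >= y} (meaningful for 0 < y <= Gamma 0).\<close>
definition gen_inv :: "(real \<Rightarrow> real) \<Rightarrow> real \<Rightarrow> real" where
  "gen_inv Gamma y = Sup {x \<in> {0..1}. Gamma x \<ge> y}"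

definition d_s :: "real \<Rightarrow> real \<Rightarrow> real \<Rightarrow> real \<Rightarrow> real \<Rightarrow> real" where
  "d_s t c w tau p = 1 - c * (1 - (1 - w) * (tau / t)) / (w * p)"

definition d_c :: "real \<Rightarrow> (real \<Rightarrow> real) \<Rightarrow> real \<Rightarrow> real \<Rightarrow> real \<Rightarrow> real" where
  "d_c t Gamma w tau p = gen_inv Gamma (p / (1 - (1 - w) * (tau / t)))"

end

theory Submission
  imports Defs
begin

text \<open>Letting the recovery delay j of JDEF_j tend to infinity, its payoff tends to that of a
  single defection after which play stops: the SP pockets the price p t while bearing only the
  trial cost c \<tau>, and the client enjoys the trial utility \<Gamma>(d) \<tau> without paying. Cooperation
  must be at least as profitable as this limit. For either player the resulting inequality, after
  clearing the positive denominator 1 - (1 - d) w and cancelling the factor 1 - d, becomes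
  linear: c (t - (1 - w) \<tau>) \<le> (1 - d) w p t, which is d \<le> d_s, and
  p t \<le> \<Gamma>(d) (t - (1 - w) \<tau>), which puts d into the set whose supremum is d_c.\<close>

lemma power_pred_LIMSEQ_zero:
  fixes w :: real
  assumes "\<bar>w\<bar> < 1"
  shows "(\<lambda>j. w ^ (j - 1)) \<longlonglongrightarrow> 0"
proof (rule LIMSEQ_imp_Suc)
  show "(\<lambda>j. w ^ (Suc j - 1)) \<longlonglongrightarrow> 0"
    using LIMSEQ_power_zero[of w] assms by simp
qed

lemma PiS_jdef_LIMSEQ:
  assumes "\<bar>w\<bar> < 1"
  shows "(\<lambda>j. PiS_jdef j t tau c p d w) \<longlonglongrightarrow> (1 - d) * (p * t - c * tau) - d * c * tau"
proof -
  have "(\<lambda>j. PiS_jdef j t tau c p d w) \<longlonglongrightarrow>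
      ((1 - d) * (p * t - c * tau - 0 * c * (t - tau)) - d * c * tau) / (1 - (1 - d) * 0)"
    unfolding PiS_jdef_def
    using power_pred_LIMSEQ_zero[OF assms] LIMSEQ_power_zero[of w] assms
    by (intro tendsto_intros) auto
  then show ?thesis by simp
qed

lemma PiC_jdef_LIMSEQ:
  assumes "\<bar>w\<bar> < 1"
  shows "(\<lambda>j. PiC_jdef j t tau G p d w) \<longlonglongrightarrow> G * tau"
proof -
  have "(\<lambda>j. PiC_jdef j t tau G p d w) \<longlonglongrightarrow>
      ((1 - d) * (G * tau + 0 * (G * (t - tau) - p * t)) + d * G * tau) / (1 - (1 - d) * 0)"
    unfolding PiC_jdef_def
    using power_pred_LIMSEQ_zero[OF assms] LIMSEQ_power_zero[of w] assms
    by (intro tendsto_intros) auto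
  then show ?thesis by (simp add: algebra_simps)
qed

lemma cooperation_conditions_imp_one_shot_bounds:
  assumes "\<bar>w\<bar> < 1" and "cooperation_conditions t tau c p d w Gamma"
  shows "(1 - d) * (p * t - c * tau) - d * c * tau \<le> PiS_coop t tau c p d w"
    and "Gamma d * tau \<le> PiC_coop t tau (Gamma d) p d w"
proof -
  have sp: "\<forall>j\<ge>2. PiS_jdef j t tau c p d w \<le> PiS_coop t tau c p d w"
    and client: "\<forall>j\<ge>2. PiC_jdef j t tau (Gamma d) p d w \<le> PiC_coop t tau (Gamma d) p d w"
    using assms(2) unfolding cooperation_conditions_def by blast+
  show "(1 - d) * (p * t - c * tau) - d * c * tau \<le> PiS_coop t tau c p d w"
    using PiS_jdef_LIMSEQ[OF assms(1)] by (rule LIMSEQ_le_const2) (use sp in blast)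
  show "Gamma d * tau \<le> PiC_coop t tau (Gamma d) p d w"
    using PiC_jdef_LIMSEQ[OF assms(1)] by (rule LIMSEQ_le_const2) (use client in blast)
qed

lemma one_shot_le_PiS_coop_iff:
  assumes "d < 1" and "(1 - d) * w < 1"
  shows "(1 - d) * (p * t - c * tau) - d * c * tau \<le> PiS_coop t tau c p d w
     \<longleftrightarrow> c * (t - (1 - w) * tau) \<le> (1 - d) * w * p * t"
proof -
  have "(1 - d) * (p * t - c * tau) - d * c * tau \<le> PiS_coop t tau c p d w
     \<longleftrightarrow> 0 \<le> (1 - d) * (p - c) * t - d * c * tau
           - ((1 - d) * (p * t - c * tau) - d * c * tau) * (1 - (1 - d) * w)"
    using assms(2) unfolding PiS_coop_def by (simp add: pos_le_divide_eq)
  also have "\<dots> \<longleftrightarrow> 0 \<le> (1 - d) * ((1 - d) * w * p * t - c * (t - (1 - w) * tau))"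
    by (simp add: algebra_simps)
  also have "\<dots> \<longleftrightarrow> c * (t - (1 - w) * tau) \<le> (1 - d) * w * p * t"
    using assms(1) by (simp add: zero_le_mult_iff)
  finally show ?thesis .
qed

lemma one_shot_le_PiC_coop_iff:
  assumes "d < 1" and "(1 - d) * w < 1"
  shows "G * tau \<le> PiC_coop t tau G p d w \<longleftrightarrow> p * t \<le> G * (t - (1 - w) * tau)"
proof -
  have "G * tau \<le> PiC_coop t tau G p d w
     \<longleftrightarrow> 0 \<le> (1 - d) * (G - p) * t + d * G * tau - G * tau * (1 - (1 - d) * w)"
    using assms(2) unfolding PiC_coop_def by (simp add: pos_le_divide_eq)
  also have "\<dots> \<longleftrightarrow> 0 \<le> (1 - d) * (G * (t - (1 - w) * tau) - p * t)"
    by (simp add: algebra_simps)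
  also have "\<dots> \<longleftrightarrow> p * t \<le> G * (t - (1 - w) * tau)"
    using assms(1) by (simp add: zero_le_mult_iff)
  finally show ?thesis .
qed

lemma le_d_s_iff:
  assumes "t > 0" and "w * p > 0"
  shows "d \<le> d_s t c w tau p \<longleftrightarrow> c * (t - (1 - w) * tau) \<le> (1 - d) * w * p * t"
proof -
  have "d \<le> d_s t c w tau p \<longleftrightarrow> c * (1 - (1 - w) * (tau / t)) / (w * p) \<le> 1 - d"
    unfolding d_s_def by linarith
  also have "\<dots> \<longleftrightarrow> c * (1 - (1 - w) * (tau / t)) \<le> (1 - d) * (w * p)"
    using assms(2) by (rule pos_divide_le_eq)
  also have "\<dots> \<longleftrightarrow> c * (t - (1 - w) * tau) \<le> (1 - d) * w * p * t"
    using assms(1) by (simp add: field_simps)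
  finally show ?thesis .
qed

lemma trial_adjusted_price_le_iff:
  fixes t tau w p G :: real
  assumes "t > 0" and "t - (1 - w) * tau > 0"
  shows "p / (1 - (1 - w) * (tau / t)) \<le> G \<longleftrightarrow> p * t \<le> G * (t - (1 - w) * tau)"
proof -
  have "1 - (1 - w) * (tau / t) = (t - (1 - w) * tau) / t"
    using assms(1) by (simp add: diff_divide_distrib)
  then show ?thesis
    using assms by (simp add: pos_divide_le_eq mult.commute)
qed

lemma le_gen_inv:
  assumes "x \<in> {0..1}" and "y \<le> Gamma x"
  shows "x \<le> gen_inv Gamma y"
  unfolding gen_inv_def using assms by (intro cSup_upper bdd_aboveI[where M = 1]) auto

theorem corollary1:
  fixes t tau c p d w :: real and Gamma :: "real \<Rightarrow> real"
  assumes "t > 0" and "0 < tau" and "tau < t" and "c > 0" and "p > c"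
    and "0 < d" and "d < 1" and "0 < w" and "w < 1"
    and "\<forall>x\<in>{0..1}. \<forall>y\<in>{0..1}. x < y \<longrightarrow> Gamma y < Gamma x"
    and "continuous_on {0..1} Gamma"
    and "\<forall>x\<in>{0..1}. Gamma x > 0"
    and "Gamma 0 > p"
    and "cooperation_conditions t tau c p d w Gamma"
  shows "d \<le> d_s t c w tau p \<and>
         p / (1 - (1 - w) * (tau / t)) \<le> Gamma 0 \<and>
         d \<le> d_c t Gamma w tau p"
proof -
  have "(1 - d) * w \<le> w" "(1 - w) * tau \<le> tau"
    using assms(2,6-9) by (auto intro: mult_left_le_one_le)
  then have w_bounds: "\<bar>w\<bar> < 1" "(1 - d) * w < 1" and trial_factor_pos: "t - (1 - w) * tau > 0"
    using assms(3,8,9) by linarith+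
  note one_shot_bounds = cooperation_conditions_imp_one_shot_bounds[OF w_bounds(1) assms(14)]
  have "d \<le> d_s t c w tau p"
    using one_shot_bounds(1) assms(1,4,5,8)
    by (simp add: le_d_s_iff one_shot_le_PiS_coop_iff[OF assms(7) w_bounds(2)])
  moreover have price_le: "p / (1 - (1 - w) * (tau / t)) \<le> Gamma d"
    unfolding trial_adjusted_price_le_iff[OF assms(1) trial_factor_pos]
    using one_shot_bounds(2) one_shot_le_PiC_coop_iff[OF assms(7) w_bounds(2)] by blast
  moreover have "Gamma d < Gamma 0"
    using assms(6,7,10) by simp
  moreover have "d \<le> d_c t Gamma w tau p"
    unfolding d_c_def using assms(6,7) price_le by (intro le_gen_inv) auto
  ultimately show ?thesis by simp
qed

end
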